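(* Let $(L,\sqsubseteq)$ be a countably complete lattice, $F:L\to L$ monotone and $\omega$-continuous, $k\in\omega$, and $b\in L^\omega$ with $b_{n+1}\sqsubseteq b_n$ for all $n$. Define sequences $G^j b$ by $(G^0b)_n=b_n$ and $(G^{j}b)_n=F\big((G^{j-1}b)_n\big)\sqcap b_n$ for $j\ge1$. If $F\big((G^kb)_n\big)\sqsubseteq b_n$ for all $n$, then $\sup_{i\ge n}F^i(\bot)\sqsubseteq b_n$ for all $n$. In particular, for $\ell\in L$ and $G_\ell(m)=F(m)\sqcap\ell$: if $F(G_\ell^k(\ell))\sqsubseteq\ell$ then $\sup_i F^i(\bot)=\mathrm{lfp}\,F\sqsubseteq\ell$.
   Context: A countably complete lattice is a lattice in which every countable subset (including $\emptyset$) has a supremum and an infimum, with least element $\bot$ and meet $\sqcap$. $F$ is $\omega$-continuous if $F(\sup_n c_n)=\sup_n F(c_n)$ for every ascending chain $(c_n)$. $F^i$ is the $i$-fold iterate. *)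

theory Defs
  imports "HOL-Library.Order_Continuity"
begin

fun Gseq :: "('a::countable_complete_lattice \<Rightarrow> 'a) \<Rightarrow> (nat \<Rightarrow> 'a) \<Rightarrow> nat \<Rightarrow> nat \<Rightarrow> 'a" where
  "Gseq F b 0 n = b n"
| "Gseq F b (Suc j) n = inf (F (Gseq F b j n)) (b n)"

end

theory Submission
  imports Defs
begin

text \<open>Write \<open>G\<^sub>l m = F m \<sqinter> l\<close>. If \<open>F (G\<^sub>l\<^sup>k l) \<le> l\<close>, then \<open>G\<^sub>l\<^sup>k l\<close> is itself a
  pre-fixpoint of \<open>F\<close>: the iterates \<open>G\<^sub>l\<^sup>j l\<close> descend, so \<open>F (G\<^sub>l\<^sup>k l)\<close> lies below
  \<open>F (G\<^sub>l\<^sup>k\<^sup>-\<^sup>1 l)\<close> and below \<open>l\<close>, hence below their meet \<open>G\<^sub>l\<^sup>k l\<close>. Therefore the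
  Kleene iterate \<open>SUP i. F\<^sup>i \<bottom>\<close>, the least pre-fixpoint of \<open>F\<close>, lies below \<open>G\<^sub>l\<^sup>k l \<le> l\<close>.
  Since \<open>(G\<^sup>k b)\<^sub>n = G\<^bsub>b n\<^esub>\<^sup>k (b n)\<close>, the statement about sequences is this argument
  applied to each \<open>b n\<close> separately; in particular \<open>b\<close> need not be decreasing.\<close>

lemma Gseq_eq_funpow: "Gseq F b j n = ((\<lambda>m. inf (F m) (b n)) ^^ j) (b n)"
  by (induction j) auto

lemma mono_inf_const:
  fixes F :: "'a::semilattice_inf \<Rightarrow> 'a"
  assumes "mono F" shows "mono (\<lambda>m. inf (F m) l)"
  using assms by (auto simp: mono_def intro: le_infI1 monoD)

lemma funpow_inf_le: "((\<lambda>m. inf (F m) l) ^^ k) l \<le> (l::'a::semilattice_inf)"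
  by (cases k) auto

lemma funpow_inf_Suc_le:
  fixes F :: "'a::semilattice_inf \<Rightarrow> 'a"
  assumes "mono F"
  shows "((\<lambda>m. inf (F m) l) ^^ Suc j) l \<le> ((\<lambda>m. inf (F m) l) ^^ j) l"
  unfolding funpow_Suc_right comp_def
  by (intro funpow_mono mono_inf_const assms) simp

lemma funpow_inf_prefixpoint:
  fixes F :: "'a::semilattice_inf \<Rightarrow> 'a"
  assumes mono: "mono F" and below: "F (((\<lambda>m. inf (F m) l) ^^ k) l) \<le> l"
  shows "F (((\<lambda>m. inf (F m) l) ^^ k) l) \<le> ((\<lambda>m. inf (F m) l) ^^ k) l"
proof (cases k)
  case 0
  with below show ?thesis by simp
next
  case (Suc j)
  let ?G = "\<lambda>m. inf (F m) l"
  have "F ((?G ^^ k) l) \<le> F ((?G ^^ j) l)"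
    using Suc funpow_inf_Suc_le[OF mono] by (simp del: funpow.simps add: monoD[OF mono])
  with below Suc show ?thesis by simp
qed

lemma cclfp_le_of_funpow_inf:
  fixes F :: "'a::countable_complete_lattice \<Rightarrow> 'a"
  assumes "mono F" and "F (((\<lambda>m. inf (F m) l) ^^ k) l) \<le> l"
  shows "cclfp F \<le> l"
  using cclfp_lowerbound[OF assms(1) funpow_inf_prefixpoint[OF assms]] funpow_inf_le
  by (rule order_trans)

theorem mainTheorem10:
  fixes F :: "'a::countable_complete_lattice \<Rightarrow> 'a" and k :: nat
  assumes mono: "mono F" and cont: "sup_continuous F"
  shows "(\<forall>b :: nat \<Rightarrow> 'a. (\<forall>n. b (Suc n) \<le> b n) \<longrightarrow>
            (\<forall>n. F (Gseq F b k n) \<le> b n) \<longrightarrow>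
            (\<forall>n. (SUP i\<in>{n..}. (F ^^ i) bot) \<le> b n))
       \<and> (\<forall>l :: 'a. F (((\<lambda>m. inf (F m) l) ^^ k) l) \<le> l \<longrightarrow>
            (F (SUP i. (F ^^ i) bot) = (SUP i. (F ^^ i) bot)
             \<and> (\<forall>x. F x = x \<longrightarrow> (SUP i. (F ^^ i) bot) \<le> x)
             \<and> (SUP i. (F ^^ i) bot) \<le> l))"
proof -
  have tail_le: "(SUP i\<in>{n..}. (F ^^ i) bot) \<le> cclfp F" for n
    unfolding cclfp_def by (rule ccSUP_subset_mono) auto
  have "(SUP i\<in>{n..}. (F ^^ i) bot) \<le> b n" if "F (Gseq F b k n) \<le> b n" for b n
    using tail_le cclfp_le_of_funpow_inf[OF mono that[unfolded Gseq_eq_funpow]]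
    by (rule order_trans)
  moreover have "F (cclfp F) = cclfp F"
    using cclfp_unfold[OF cont] by simp
  moreover have "cclfp F \<le> x" if "F x = x" for x
    using cclfp_lowerbound[OF mono] that by simp
  ultimately show ?thesis
    using cclfp_le_of_funpow_inf[OF mono] unfolding cclfp_def by blast
qed

end
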